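(* Let $R$ be a finite commutative ring with unity such that $\Gamma_E(R)$ is a fan graph with at least four vertices. Then $R$ is a local ring.
   Context: For $x,y\in R$ write $x\sim y$ iff $\operatorname{ann}(x)=\operatorname{ann}(y)$; $[x]$ denotes the equivalence class of $x$. Let $Z^*(R)$ be the set of nonzero zero divisors of $R$. The graph $\Gamma_E(R)$ is the simple graph whose vertices are the classes $[x]$ with $x\in Z^*(R)$, two distinct vertices $[x],[y]$ being adjacent iff $xy=0$. A fan graph is a complete bipartite graph $K_{n,1}$ with $n\in\mathbb N\cup\{\infty\}$. *)

theory Defs
  imports "HOL-Algebra.Algebra"
begin

definition ann :: "('a, 'm) ring_scheme \<Rightarrow> 'a \<Rightarrow> 'a set" where
  "ann R x = {y \<in> carrier R. x \<otimes>\<^bsub>R\<^esub> y = \<zero>\<^bsub>R\<^esub>}"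

definition nz_zero_divisors :: "('a, 'm) ring_scheme \<Rightarrow> 'a set" where
  "nz_zero_divisors R = {x \<in> carrier R. x \<noteq> \<zero>\<^bsub>R\<^esub> \<and>
       (\<exists>y \<in> carrier R. y \<noteq> \<zero>\<^bsub>R\<^esub> \<and> x \<otimes>\<^bsub>R\<^esub> y = \<zero>\<^bsub>R\<^esub>)}"

definition ann_class :: "('a, 'm) ring_scheme \<Rightarrow> 'a \<Rightarrow> 'a set" where
  "ann_class R x = {y \<in> carrier R. ann R y = ann R x}"

definition GammaE_vertices :: "('a, 'm) ring_scheme \<Rightarrow> 'a set set" where
  "GammaE_vertices R = ann_class R ` nz_zero_divisors R"

definition GammaE_adj :: "('a, 'm) ring_scheme \<Rightarrow> 'a set \<Rightarrow> 'a set \<Rightarrow> bool" where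
  "GammaE_adj R A B \<longleftrightarrow> A \<noteq> B \<and>
     (\<exists>x \<in> nz_zero_divisors R. \<exists>y \<in> nz_zero_divisors R.
        A = ann_class R x \<and> B = ann_class R y \<and> x \<otimes>\<^bsub>R\<^esub> y = \<zero>\<^bsub>R\<^esub>)"

(* simple graph (V, E) is a fan graph K_{n,1}: a centre c adjacent to every other
   vertex, with no edges among the remaining n vertices (n \<ge> 1) *)
definition fan_graph :: "'v set \<Rightarrow> ('v \<Rightarrow> 'v \<Rightarrow> bool) \<Rightarrow> bool" where
  "fan_graph V E \<longleftrightarrow> (\<exists>c \<in> V. (\<exists>v \<in> V. v \<noteq> c) \<and>
      (\<forall>v \<in> V. v \<noteq> c \<longrightarrow> E c v \<and> E v c) \<and>
      (\<forall>u \<in> V. \<forall>v \<in> V. u \<noteq> c \<longrightarrow> v \<noteq> c \<longrightarrow> \<not> E u v))"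

definition local_ring :: "('a, 'm) ring_scheme \<Rightarrow> bool" where
  "local_ring R \<longleftrightarrow> (\<exists>!I. maximalideal I R)"

end

theory Submission imports Defs begin

text \<open>
  If \<open>R\<close> is not local, two distinct maximal ideals give \<open>1 = a + m\<close> with \<open>a \<in> M\<^sub>1\<close>,
  \<open>m \<in> M\<^sub>2\<close>; as \<open>R\<close> is finite, some power \<open>e\<close> of \<open>a\<close> is idempotent, and \<open>e\<close> lies in
  \<open>M\<^sub>1\<close> but not in the prime ideal \<open>M\<^sub>2\<close>, so \<open>e \<noteq> 0, 1\<close>. The classes of \<open>e\<close> and
  \<open>1 - e\<close> are adjacent, so one of them is the centre of the fan. But with four or more
  vertices the class of a nontrivial idempotent cannot be the centre.
\<close>

section \<open>Idempotents of finite commutative rings\<close>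

lemma (in monoid) finite_carrier_idempotent_power:
  assumes fin: "finite (carrier G)" and a: "a \<in> carrier G"
  shows "\<exists>k::nat. k \<ge> 1 \<and> a [^] k \<otimes> a [^] k = a [^] k"
proof -
  have "\<not> inj (\<lambda>n::nat. a [^] n)"
  proof
    assume "inj (\<lambda>n::nat. a [^] n)"
    moreover have "finite (range (\<lambda>n::nat. a [^] n))"
      using a by (intro finite_subset[OF _ fin]) auto
    ultimately show False using finite_imageD by fastforce
  qed
  then obtain i j :: nat where "i < j" and ij: "a [^] i = a [^] j"
    unfolding inj_def by (metis linorder_neqE_nat)
  define p where "p = j - i"
  have "p > 0" using \<open>i < j\<close> by (simp add: p_def)
  have period: "a [^] (n + m * p) = a [^] n" if "n \<ge> i" for n m
  proof (induction m)
    case (Suc m)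
    have "n + Suc m * p = (n + m * p - i) + j" and "n + m * p = (n + m * p - i) + i"
      using that \<open>i < j\<close> by (auto simp: p_def)
    then have "a [^] (n + Suc m * p) = a [^] (n + m * p)"
      using a by (metis ij nat_pow_mult)
    then show ?case using Suc by simp
  qed simp
  define k where "k = (i + 1) * p"
  have "k \<ge> i + 1"
    using \<open>p > 0\<close> unfolding k_def by (metis One_nat_def Suc_leI mult_le_mono2 mult_1_right)
  moreover have "a [^] k \<otimes> a [^] k = a [^] k"
    using a period[of k "i + 1"] \<open>k \<ge> i + 1\<close> by (simp add: nat_pow_mult k_def)
  ultimately show ?thesis by (intro exI[of _ k]) simp
qed

lemma (in primeideal) nat_pow_mem_imp_mem:
  assumes "a \<in> carrier R" "a [^] (n::nat) \<in> I" "n \<noteq> 0"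
  shows "a \<in> I"
  using assms(2,3)
proof (induction n)
  case (Suc n)
  then have "a [^] n \<in> I \<or> a \<in> I" using I_prime assms(1) by simp
  then show ?case using Suc assms(1) by (cases "n = 0") auto
qed simp

lemma (in cring) finite_ex_maximalideal:
  assumes fin: "finite (carrier R)" and "\<one> \<noteq> \<zero>"
  shows "\<exists>M. maximalideal M R"
proof -
  define S where "S = {I. ideal I R \<and> I \<noteq> carrier R}"
  have "S \<subseteq> Pow (carrier R)" by (auto simp: S_def dest: ideal.Icarr)
  then have "finite S" using fin by (meson finite_Pow_iff finite_subset)
  moreover have "{\<zero>} \<in> S"
    using assms(2) one_closed zeroideal by (auto simp: S_def)
  ultimately obtain M where M: "M \<in> S" "\<forall>J\<in>S. M \<subseteq> J \<longrightarrow> M = J"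
    using finite_has_maximal by blast
  then have "maximalideal M R"
    by (intro maximalidealI) (auto simp: S_def)
  then show ?thesis by blast
qed

lemma (in cring) maximalideals_comaximal:
  assumes M1: "maximalideal M1 R" and M2: "maximalideal M2 R" and "M1 \<noteq> M2"
  shows "\<exists>a\<in>M1. \<exists>m\<in>M2. a \<oplus> m = \<one>"
proof -
  interpret M1: maximalideal M1 R by (fact M1)
  interpret M2: maximalideal M2 R by (fact M2)
  have sum_ideal: "ideal (M1 <+>\<^bsub>R\<^esub> M2) R"
    by (rule add_ideals[OF M1.is_ideal M2.is_ideal])
  have "M1 \<union> M2 \<subseteq> carrier R" using M1.Icarr M2.Icarr by blast
  then have sub: "M1 \<union> M2 \<subseteq> M1 <+>\<^bsub>R\<^esub> M2"
    using genideal_self union_genideal[OF M1.is_ideal M2.is_ideal] by metis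
  have sum_carrier: "M1 <+>\<^bsub>R\<^esub> M2 \<subseteq> carrier R" using ideal.Icarr[OF sum_ideal] by blast
  have "M1 <+>\<^bsub>R\<^esub> M2 = carrier R"
  proof (rule ccontr)
    assume "M1 <+>\<^bsub>R\<^esub> M2 \<noteq> carrier R"
    moreover have "M1 \<subseteq> M1 <+>\<^bsub>R\<^esub> M2" using sub by simp
    ultimately have "M1 <+>\<^bsub>R\<^esub> M2 = M1" using M1.I_maximal[OF sum_ideal _ sum_carrier] by simp
    then have "M2 \<subseteq> M1" using sub by simp
    then have "M1 = M2 \<or> M1 = carrier R" using M2.I_maximal[OF M1.is_ideal] M1.Icarr by blast
    then show False using M1.I_notcarr \<open>M1 \<noteq> M2\<close> by simp
  qed
  then have "\<one> \<in> M1 <+>\<^bsub>R\<^esub> M2" by simp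
  then obtain a m where "a \<in> M1" "m \<in> M2" "\<one> = a \<oplus> m" unfolding set_add_def' by blast
  then show ?thesis by auto
qed

definition nontrivial_idempotent :: "('a, 'm) ring_scheme \<Rightarrow> 'a \<Rightarrow> bool" where
  "nontrivial_idempotent R e \<longleftrightarrow>
     e \<in> carrier R \<and> e \<otimes>\<^bsub>R\<^esub> e = e \<and> e \<noteq> \<zero>\<^bsub>R\<^esub> \<and> e \<noteq> \<one>\<^bsub>R\<^esub>"

context cring
begin

lemma idempotent_complement_orthogonal:
  assumes "e \<in> carrier R" "e \<otimes> e = e"
  shows "e \<otimes> (\<one> \<ominus> e) = \<zero>"
proof -
  have "e \<otimes> (\<one> \<ominus> e) = e \<ominus> e \<otimes> e" using assms(1) by algebra
  then show ?thesis using assms by (simp add: r_neg)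
qed

lemma nontrivial_idempotent_complement:
  assumes "nontrivial_idempotent R e"
  shows "nontrivial_idempotent R (\<one> \<ominus> e)"
proof -
  have e: "e \<in> carrier R" "e \<otimes> e = e" "e \<noteq> \<zero>" "e \<noteq> \<one>"
    using assms by (auto simp: nontrivial_idempotent_def)
  have "\<one> = (\<one> \<ominus> e) \<oplus> e" "e = \<one> \<ominus> (\<one> \<ominus> e)"
    using e(1) by algebra+
  moreover have "\<one> \<ominus> \<one> = \<zero>" by algebra
  ultimately have "\<one> \<ominus> e \<noteq> \<zero>" "\<one> \<ominus> e \<noteq> \<one>"
    using e(1,3,4) by auto
  moreover have "(\<one> \<ominus> e) \<otimes> (\<one> \<ominus> e) = \<one> \<ominus> e"
  proof -
    have "(\<one> \<ominus> e) \<otimes> (\<one> \<ominus> e) = (\<one> \<ominus> e) \<ominus> e \<otimes> (\<one> \<ominus> e)"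
      using e(1) by algebra
    then show ?thesis using idempotent_complement_orthogonal[OF e(1,2)] e(1) by (simp add: a_minus_def)
  qed
  ultimately show ?thesis using e(1) by (simp add: nontrivial_idempotent_def)
qed

lemma nontrivial_idempotent_if_not_local:
  assumes fin: "finite (carrier R)" and "\<one> \<noteq> \<zero>" and "\<not> local_ring R"
  shows "\<exists>e. nontrivial_idempotent R e"
proof -
  obtain M1 where M1: "maximalideal M1 R"
    using finite_ex_maximalideal[OF assms(1,2)] by blast
  then obtain M2 where M2: "maximalideal M2 R" "M1 \<noteq> M2"
    using \<open>\<not> local_ring R\<close> unfolding local_ring_def by blast
  interpret M1: maximalideal M1 R by (fact M1)
  interpret M2: maximalideal M2 R by (fact M2(1))
  obtain a m where "a \<in> M1" "m \<in> M2" and sum: "a \<oplus> m = \<one>"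
    using maximalideals_comaximal[OF M1 M2] by blast
  then have a: "a \<in> carrier R" using M1.Icarr by blast
  obtain k :: nat where "k \<ge> 1" and idem: "a [^] k \<otimes> a [^] k = a [^] k"
    using finite_carrier_idempotent_power[OF fin a] by blast
  have "a [^] k = a [^] (k - 1) \<otimes> a"
    using \<open>k \<ge> 1\<close> nat_pow_Suc[of a "k - 1"] by simp
  then have "a [^] k \<in> M1" using \<open>a \<in> M1\<close> a by (simp add: M1.I_l_closed)
  then have "a [^] k \<noteq> \<one>" using M1.one_imp_carrier M1.I_notcarr by auto
  moreover have "a [^] k \<noteq> \<zero>"
  proof
    assume "a [^] k = \<zero>"
    then have "a [^] k \<in> M2" by simp
    then have "a \<in> M2"
      using primeideal.nat_pow_mem_imp_mem[OF maximalideal_prime[OF M2(1)] a] \<open>k \<ge> 1\<close> by simp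
    then have "a \<oplus> m \<in> M2" using M2.a_closed \<open>m \<in> M2\<close> by blast
    then have "\<one> \<in> M2" using sum by simp
    then show False using M2.one_imp_carrier M2.I_notcarr by auto
  qed
  ultimately show ?thesis
    using a idem by (intro exI[of _ "a [^] k"]) (simp add: nontrivial_idempotent_def)
qed

section \<open>Adjacency in the graph of annihilator classes\<close>

lemma ann_mem_iff: "y \<in> ann R x \<longleftrightarrow> y \<in> carrier R \<and> x \<otimes> y = \<zero>"
  by (simp add: ann_def)

lemma ann_class_eq_iff:
  assumes "x \<in> carrier R" "y \<in> carrier R"
  shows "ann_class R x = ann_class R y \<longleftrightarrow> ann R x = ann R y"
  using assms unfolding ann_class_def by blast

lemma ann_class_in_GammaE_vertices:
  "x \<in> nz_zero_divisors R \<Longrightarrow> ann_class R x \<in> GammaE_vertices R"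
  by (simp add: GammaE_vertices_def)

lemma nz_zero_divisorsD: "x \<in> nz_zero_divisors R \<Longrightarrow> x \<in> carrier R \<and> x \<noteq> \<zero>"
  by (simp add: nz_zero_divisors_def)

lemma nz_zero_divisor_imp_one_neq_zero:
  assumes "x \<in> nz_zero_divisors R" shows "\<one> \<noteq> \<zero>"
proof
  assume "\<one> = \<zero>"
  have "x = x \<otimes> \<one>" using assms nz_zero_divisorsD by simp
  also have "\<dots> = \<zero>" using \<open>\<one> = \<zero>\<close> assms nz_zero_divisorsD by simp
  finally show False using assms nz_zero_divisorsD by simp
qed

lemma nz_zero_divisorsI:
  "\<lbrakk> x \<in> carrier R; x \<noteq> \<zero>; y \<in> carrier R; y \<noteq> \<zero>; x \<otimes> y = \<zero> \<rbrakk> \<Longrightarrow> x \<in> nz_zero_divisors R"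
  unfolding nz_zero_divisors_def by blast

lemma GammaE_adj_ann_class_iff:
  assumes x: "x \<in> nz_zero_divisors R" and y: "y \<in> nz_zero_divisors R"
  shows "GammaE_adj R (ann_class R x) (ann_class R y) \<longleftrightarrow> ann R x \<noteq> ann R y \<and> x \<otimes> y = \<zero>"
proof -
  have xy: "x \<in> carrier R" "y \<in> carrier R" using x y nz_zero_divisorsD by auto
  have "x \<otimes> y = \<zero>" if adj: "GammaE_adj R (ann_class R x) (ann_class R y)"
  proof -
    obtain x' y' where x': "x' \<in> nz_zero_divisors R" and y': "y' \<in> nz_zero_divisors R"
      and "ann_class R x = ann_class R x'" "ann_class R y = ann_class R y'" and "x' \<otimes> y' = \<zero>"
      using adj unfolding GammaE_adj_def by blast
    moreover have "x' \<in> carrier R" "y' \<in> carrier R" using x' y' nz_zero_divisorsD by auto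
    ultimately have "ann R x = ann R x'" "ann R y = ann R y'" "y' \<in> ann R x'"
      using ann_class_eq_iff xy by (auto simp: ann_mem_iff)
    then have "x \<in> ann R y" using xy by (auto simp: ann_mem_iff m_comm)
    then show ?thesis by (simp add: ann_mem_iff m_comm xy)
  qed
  then show ?thesis
    using x y ann_class_eq_iff[OF xy] unfolding GammaE_adj_def by blast
qed

lemma nontrivial_idempotent_nz_zero_divisor:
  assumes "nontrivial_idempotent R e"
  shows "e \<in> nz_zero_divisors R"
  using assms nontrivial_idempotent_complement[OF assms]
    idempotent_complement_orthogonal[of e]
  by (intro nz_zero_divisorsI[of e "\<one> \<ominus> e"]) (auto simp: nontrivial_idempotent_def)

end

section \<open>A nontrivial idempotent cannot be the centre of a fan\<close>

definition fan_centre :: "'v set \<Rightarrow> ('v \<Rightarrow> 'v \<Rightarrow> bool) \<Rightarrow> 'v \<Rightarrow> bool" where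
  "fan_centre V E c \<longleftrightarrow> c \<in> V \<and>
      (\<forall>v \<in> V. v \<noteq> c \<longrightarrow> E c v \<and> E v c) \<and>
      (\<forall>u \<in> V. \<forall>v \<in> V. u \<noteq> c \<longrightarrow> v \<noteq> c \<longrightarrow> \<not> E u v)"

lemma fan_graph_ex_centre: "fan_graph V E \<Longrightarrow> \<exists>c. fan_centre V E c"
  unfolding fan_graph_def fan_centre_def by blast

lemma fan_centre_in: "fan_centre V E c \<Longrightarrow> c \<in> V"
  by (simp add: fan_centre_def)

lemma fan_centre_adj: "\<lbrakk> fan_centre V E c; v \<in> V; v \<noteq> c \<rbrakk> \<Longrightarrow> E c v"
  by (simp add: fan_centre_def)

lemma fan_centre_leaves_not_adj: "\<lbrakk> fan_centre V E c; u \<in> V; v \<in> V; u \<noteq> c; v \<noteq> c \<rbrakk> \<Longrightarrow> \<not> E u v"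
  by (simp add: fan_centre_def)

context cring
begin

lemma fan_centre_mult_zero:
  assumes centre: "fan_centre (GammaE_vertices R) (GammaE_adj R) (ann_class R e)"
    and e: "e \<in> nz_zero_divisors R" and x: "x \<in> nz_zero_divisors R"
    and "ann_class R x \<noteq> ann_class R e"
  shows "e \<otimes> x = \<zero>"
proof -
  have "GammaE_adj R (ann_class R e) (ann_class R x)"
    using fan_centre_adj[OF centre ann_class_in_GammaE_vertices[OF x]] assms(4) .
  then show ?thesis using GammaE_adj_ann_class_iff[OF e x] by simp
qed

lemma fan_leaves_mult_zero_imp_ann_eq:
  assumes centre: "fan_centre (GammaE_vertices R) (GammaE_adj R) c"
    and x: "x \<in> nz_zero_divisors R" and y: "y \<in> nz_zero_divisors R"
    and "ann_class R x \<noteq> c" "ann_class R y \<noteq> c" "x \<otimes> y = \<zero>"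
  shows "ann R x = ann R y"
proof -
  have "\<not> GammaE_adj R (ann_class R x) (ann_class R y)"
    using fan_centre_leaves_not_adj[OF centre ann_class_in_GammaE_vertices[OF x]
        ann_class_in_GammaE_vertices[OF y]] assms(4,5) .
  then show ?thesis using GammaE_adj_ann_class_iff[OF x y] assms(6) by simp
qed

text \<open>
  Let the centre be the class of a nontrivial idempotent \<open>e\<close> with complement \<open>f = 1 - e\<close>.
  A vertex \<open>[x]\<close> other than \<open>[e]\<close> and \<open>[f]\<close> satisfies \<open>ex = 0\<close>, hence \<open>ann f \<subseteq> ann x\<close>, and
  an element \<open>y\<close> of the difference yields \<open>b = fy\<close> with \<open>xb = 0\<close> off the centre; as leaves are
  pairwise non-adjacent, \<open>ann x = ann b \<ni> x\<close>.
\<close>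
lemma fan_centre_idempotent_square_zero:
  assumes e: "nontrivial_idempotent R e"
    and centre: "fan_centre (GammaE_vertices R) (GammaE_adj R) (ann_class R e)"
    and x: "x \<in> nz_zero_divisors R"
    and x_ne_e: "ann_class R x \<noteq> ann_class R e" and x_ne_f: "ann_class R x \<noteq> ann_class R (\<one> \<ominus> e)"
  shows "x \<otimes> x = \<zero>"
proof -
  define f where "f = \<one> \<ominus> e"
  have ec: "e \<in> carrier R" "e \<otimes> e = e" "e \<noteq> \<zero>"
    using e by (auto simp: nontrivial_idempotent_def)
  have fc: "f \<in> carrier R" using ec by (simp add: f_def)
  have ef: "e \<otimes> f = \<zero>" using idempotent_complement_orthogonal[OF ec(1,2)] by (simp add: f_def)
  have xc: "x \<in> carrier R" "x \<noteq> \<zero>" using x nz_zero_divisorsD by auto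
  have ex: "e \<otimes> x = \<zero>"
    using fan_centre_mult_zero[OF centre nontrivial_idempotent_nz_zero_divisor[OF e] x x_ne_e] .
  have "ann R f \<subseteq> ann R x"
  proof
    fix y assume "y \<in> ann R f"
    then have y: "y \<in> carrier R" "f \<otimes> y = \<zero>" by (auto simp: ann_mem_iff)
    have "e \<otimes> y = y \<ominus> f \<otimes> y" unfolding f_def using y(1) ec(1) by algebra
    then have "e \<otimes> y = y" using y by (simp add: a_minus_def)
    then have "x \<otimes> y = x \<otimes> (e \<otimes> y)" by simp
    also have "\<dots> = (e \<otimes> x) \<otimes> y" using y(1) ec(1) xc(1) by (simp add: m_assoc m_comm m_lcomm)
    also have "\<dots> = \<zero>" using ex y(1) by simp
    finally show "y \<in> ann R x" using y(1) by (simp add: ann_mem_iff)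
  qed
  moreover have "ann R f \<noteq> ann R x" using x_ne_f ann_class_eq_iff fc xc by (auto simp: f_def)
  ultimately obtain y where "y \<in> ann R x" "y \<notin> ann R f" by blast
  then have y: "y \<in> carrier R" "x \<otimes> y = \<zero>" "f \<otimes> y \<noteq> \<zero>"
    by (auto simp: ann_mem_iff)
  define b where "b = f \<otimes> y"
  have bc: "b \<in> carrier R" "b \<noteq> \<zero>" using y fc by (auto simp: b_def)
  have "x \<otimes> b = f \<otimes> (x \<otimes> y)" unfolding b_def by (rule m_lcomm[OF xc(1) fc y(1)])
  then have xb: "x \<otimes> b = \<zero>" using y(2) fc by simp
  have "e \<otimes> b = (e \<otimes> f) \<otimes> y" unfolding b_def using m_assoc[OF ec(1) fc y(1)] by simp
  then have eb: "e \<otimes> b = \<zero>" using ef y(1) by simp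
  have b: "b \<in> nz_zero_divisors R" using nz_zero_divisorsI[OF bc ec(1,3)] eb ec(1) bc(1) m_comm by simp
  have "e \<in> ann R b" "e \<notin> ann R e" using eb ec bc e m_comm by (auto simp: ann_mem_iff nontrivial_idempotent_def)
  then have "ann_class R b \<noteq> ann_class R e" using ann_class_eq_iff bc ec by auto
  then have "ann R x = ann R b"
    using fan_leaves_mult_zero_imp_ann_eq[OF centre x b x_ne_e _ xb] by blast
  moreover have "x \<in> ann R b" using xb xc bc m_comm by (simp add: ann_mem_iff)
  ultimately have "x \<in> ann R x" by simp
  then show ?thesis by (simp add: ann_mem_iff)
qed

text \<open>
  With such a nilpotent \<open>x\<close>, the element \<open>w = e + x\<close> is a zero divisor (\<open>wx = 0\<close>) with
  \<open>ew = e \<noteq> 0\<close>, so \<open>[w]\<close> must be the centre; but \<open>wf = x \<noteq> 0\<close> although \<open>f \<in> ann e\<close>.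
\<close>
lemma nontrivial_idempotent_not_fan_centre:
  assumes e: "nontrivial_idempotent R e"
    and centre: "fan_centre (GammaE_vertices R) (GammaE_adj R) (ann_class R e)"
    and card: "card (GammaE_vertices R) \<ge> 4"
  shows False
proof -
  define f where "f = \<one> \<ominus> e"
  have ec: "e \<in> carrier R" "e \<otimes> e = e" "e \<noteq> \<zero>"
    using e by (auto simp: nontrivial_idempotent_def)
  have e_zd: "e \<in> nz_zero_divisors R" by (rule nontrivial_idempotent_nz_zero_divisor[OF e])
  have fc: "f \<in> carrier R" using ec by (simp add: f_def)
  have ef: "e \<otimes> f = \<zero>" using idempotent_complement_orthogonal[OF ec(1,2)] by (simp add: f_def)
  have "\<not> GammaE_vertices R \<subseteq> {ann_class R e, ann_class R f}"
  proof
    assume "GammaE_vertices R \<subseteq> {ann_class R e, ann_class R f}"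
    then have "card (GammaE_vertices R) \<le> card {ann_class R e, ann_class R f}"
      by (rule card_mono[rotated]) simp
    also have "\<dots> \<le> 2" by (simp add: card_insert_if)
    finally show False using card by simp
  qed
  then obtain x where x: "x \<in> nz_zero_divisors R"
    and x_ne_e: "ann_class R x \<noteq> ann_class R e" and x_ne_f: "ann_class R x \<noteq> ann_class R f"
    unfolding GammaE_vertices_def by blast
  have xc: "x \<in> carrier R" "x \<noteq> \<zero>" using x nz_zero_divisorsD by auto
  have ex: "e \<otimes> x = \<zero>" using fan_centre_mult_zero[OF centre e_zd x x_ne_e] .
  have xx: "x \<otimes> x = \<zero>"
    using fan_centre_idempotent_square_zero[OF e centre x x_ne_e] x_ne_f by (simp add: f_def)
  define w where "w = e \<oplus> x"
  have wc: "w \<in> carrier R" using ec xc by (simp add: w_def)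
  have ew: "e \<otimes> w = e" unfolding w_def using ec xc ex by (simp add: r_distr)
  have "w \<otimes> x = \<zero>" unfolding w_def using ec xc ex xx by (simp add: l_distr)
  moreover have "w \<noteq> \<zero>" using ew ec by auto
  ultimately have w: "w \<in> nz_zero_divisors R" using nz_zero_divisorsI[OF wc _ xc(1,2)] by simp
  show False
  proof (cases "ann_class R w = ann_class R e")
    case True
    then have "f \<in> ann R w" using ann_class_eq_iff wc ec ef fc by (auto simp: ann_mem_iff)
    moreover have "w \<otimes> f = x"
    proof -
      have "w \<otimes> f = e \<otimes> f \<oplus> (x \<ominus> e \<otimes> x)"
        unfolding w_def f_def using ec(1) xc(1) by algebra
      then show ?thesis using ef ex xc by (simp add: a_minus_def)
    qed
    ultimately show False using xc by (simp add: ann_mem_iff)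
  next
    case False
    then show False using fan_centre_mult_zero[OF centre e_zd w] ew ec by simp
  qed
qed

lemma fan_centre_idempotent_or_complement:
  assumes centre: "fan_centre (GammaE_vertices R) (GammaE_adj R) c" and e: "nontrivial_idempotent R e"
  shows "c = ann_class R e \<or> c = ann_class R (\<one> \<ominus> e)"
proof (rule ccontr)
  assume leaves: "\<not> ?thesis"
  have f: "nontrivial_idempotent R (\<one> \<ominus> e)" by (rule nontrivial_idempotent_complement[OF e])
  have e_zd: "e \<in> nz_zero_divisors R" and f_zd: "\<one> \<ominus> e \<in> nz_zero_divisors R"
    using nontrivial_idempotent_nz_zero_divisor e f by auto
  have "e \<in> ann R (\<one> \<ominus> e)" "e \<notin> ann R e"
    using e f idempotent_complement_orthogonal[of e] m_comm
    by (auto simp: ann_mem_iff nontrivial_idempotent_def)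
  then have "ann R e \<noteq> ann R (\<one> \<ominus> e)" by blast
  then have "GammaE_adj R (ann_class R e) (ann_class R (\<one> \<ominus> e))"
    using GammaE_adj_ann_class_iff[OF e_zd f_zd] idempotent_complement_orthogonal[of e] e
    by (simp add: nontrivial_idempotent_def)
  moreover have "\<not> GammaE_adj R (ann_class R e) (ann_class R (\<one> \<ominus> e))"
    using fan_centre_leaves_not_adj[OF centre ann_class_in_GammaE_vertices[OF e_zd]
        ann_class_in_GammaE_vertices[OF f_zd]] leaves by blast
  ultimately show False by contradiction
qed

end

theorem corollary2p5:
  fixes R :: "('a, 'm) ring_scheme"
  assumes "cring R"
    and "finite (carrier R)"
    and "fan_graph (GammaE_vertices R) (GammaE_adj R)"
    and "card (GammaE_vertices R) \<ge> 4"
  shows "local_ring R"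
proof (rule ccontr)
  interpret cring R by fact
  assume "\<not> local_ring R"
  obtain c where centre: "fan_centre (GammaE_vertices R) (GammaE_adj R) c"
    using fan_graph_ex_centre[OF assms(3)] by blast
  then have "c \<in> GammaE_vertices R" by (rule fan_centre_in)
  then obtain z where "z \<in> nz_zero_divisors R" unfolding GammaE_vertices_def by blast
  then obtain e where e: "nontrivial_idempotent R e"
    using nontrivial_idempotent_if_not_local[OF assms(2) nz_zero_divisor_imp_one_neq_zero]
      \<open>\<not> local_ring R\<close> by blast
  note not_centre = nontrivial_idempotent_not_fan_centre[OF _ _ assms(4)]
  from fan_centre_idempotent_or_complement[OF centre e] show False
  proof
    assume "c = ann_class R e"
    with centre show False using not_centre[OF e] by blast
  next
    assume "c = ann_class R (\<one>\<^bsub>R\<^esub> \<ominus>\<^bsub>R\<^esub> e)"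
    with centre show False using not_centre[OF nontrivial_idempotent_complement[OF e]] by blast
  qed
qed

end
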